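(* Let $C'\ge 2$ and $m\ge 1$ be integers, let $f:\mathcal X\to\mathbb R^d$ be a fixed feature map and $D_1,\dots,D_{C'}$ class-conditional distributions on $\mathcal X$, under the standing assumptions in the context. Then \[ \mathrm{err}^{\mathrm{NCC}}_{m}(f)\le \frac{1}{C'}\sum_{i=1}^{C'}\sum_{j\neq i}\frac{4\tilde V_{ij}+\frac{12}{m}V_{ij}^2+\frac{6}{m}V_{ij}}{\bigl(1+\frac{v_j-v_i}{m d_{ij}^2}\bigr)^2}+\frac{1}{C'}\sum_{i=1}^{C'}\sum_{j\neq i}\frac{\frac{3}{m^3}\bigl(\Theta_{ij}+2(m-1)V_{ij}^2\bigr)}{\bigl(1+\frac{v_j-v_i}{m d_{ij}^2}\bigr)^2}. \]
   Context: Setup (nearest-class-centroid few-shot classification). Fix $f:\mathcal X\to\mathbb R^d$ and distributions $D_1,\dots,D_{C'}$ on $\mathcal X$. For a class $c$, let $z_c=f(x)$ with $x\sim D_c$, $\mu_c:=\mathbb E[z_c]$, $\Sigma_c:=\mathrm{Cov}(z_c)$, $v_c:=\mathrm{tr}(\Sigma_c)$, and $M_{4,c}:=\mathbb E\|z_c-\mu_c\|_2^4$, assumed finite. For each class $c$ draw a support set $x_{c,1},\dots,x_{c,m}$ i.i.d. from $D_c$, independently across classes; let $\widehat\mu_c:=\frac1m\sum_{s=1}^m f(x_{c,s})$. NCC predicts $\widehat y(z)\in\arg\min_c\|z-\widehat\mu_c\|_2^2$ with a fixed tie-breaking rule; $\mathrm{err}^{\mathrm{NCC}}_m(f):=\frac1{C'}\sum_{i}\Pr(\widehat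 y(z_i)\neq i)$ with $z_i=f(x_i)$, $x_i\sim D_i$ independent of the support sets. For $i\neq j$: $d_{ij}:=\|\mu_j-\mu_i\|_2>0$, $u_{ij}:=(\mu_j-\mu_i)/d_{ij}$, $\tilde V_{ij}:=\frac{u_{ij}^\top\Sigma_iu_{ij}}{d_{ij}^2}$, $V_{ij}:=\frac{v_i+v_j}{d_{ij}^2}$, $\Theta_{ij}:=\frac{M_{4,i}+M_{4,j}}{d_{ij}^4}$. It is assumed that $d_{ij}^2+\frac{v_j-v_i}{m}>0$ for all $i\ne j$. *)

theory Defs
  imports "HOL-Probability.Probability"
begin

definition feat_mean :: "'x measure \<Rightarrow> ('x \<Rightarrow> 'a::euclidean_space) \<Rightarrow> 'a" where
  "feat_mean D f = (\<integral>x. f x \<partial>D)"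

definition feat_tvar :: "'x measure \<Rightarrow> ('x \<Rightarrow> 'a::euclidean_space) \<Rightarrow> real" where
  "feat_tvar D f = (\<integral>x. (norm (f x - feat_mean D f))^2 \<partial>D)"

definition feat_dirvar :: "'x measure \<Rightarrow> ('x \<Rightarrow> 'a::euclidean_space) \<Rightarrow> 'a \<Rightarrow> real" where
  "feat_dirvar D f u = (\<integral>x. (u \<bullet> (f x - feat_mean D f))^2 \<partial>D)"

definition feat_M4 :: "'x measure \<Rightarrow> ('x \<Rightarrow> 'a::euclidean_space) \<Rightarrow> real" where
  "feat_M4 D f = (\<integral>x. (norm (f x - feat_mean D f))^4 \<partial>D)"

definition tie_rule :: "(nat set \<Rightarrow> nat) \<Rightarrow> bool" where
  "tie_rule tb \<longleftrightarrow> (\<forall>A. A \<noteq> {} \<longrightarrow> tb A \<in> A)"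

definition ncc_pred :: "(nat set \<Rightarrow> nat) \<Rightarrow> nat \<Rightarrow> (nat \<Rightarrow> 'a::euclidean_space) \<Rightarrow> 'a \<Rightarrow> nat" where
  "ncc_pred tb C mu z =
     tb {c. c < C \<and> (\<forall>c'<C. (norm (z - mu c))^2 \<le> (norm (z - mu c'))^2)}"

text \<open>Support sets: S c s for class c < C and shot s < m, all independent,
  S c s ~ D c.\<close>

definition support_measure :: "nat \<Rightarrow> nat \<Rightarrow> (nat \<Rightarrow> 'x measure) \<Rightarrow> (nat \<Rightarrow> nat \<Rightarrow> 'x) measure" where
  "support_measure C m D = (\<Pi>\<^sub>M c\<in>{..<C}. (\<Pi>\<^sub>M s\<in>{..<m}. D c))"

definition emp_centroid :: "nat \<Rightarrow> ('x \<Rightarrow> 'a::euclidean_space) \<Rightarrow> (nat \<Rightarrow> nat \<Rightarrow> 'x) \<Rightarrow> nat \<Rightarrow> 'a" where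
  "emp_centroid m f S c = (1 / real m) *\<^sub>R (\<Sum>s<m. f (S c s))"

definition ncc_err :: "(nat set \<Rightarrow> nat) \<Rightarrow> nat \<Rightarrow> nat \<Rightarrow> (nat \<Rightarrow> 'x measure) \<Rightarrow> ('x \<Rightarrow> 'a::euclidean_space) \<Rightarrow> real" where
  "ncc_err tb C m D f =
     (1 / real C) * (\<Sum>i<C.
        measure (support_measure C m D \<Otimes>\<^sub>M D i)
          {\<omega> \<in> space (support_measure C m D \<Otimes>\<^sub>M D i).
             ncc_pred tb C (emp_centroid m f (fst \<omega>)) (f (snd \<omega>)) \<noteq> i})"

end

theory Submission
  imports Defs
begin

text \<open>A query z of class i is misclassified only if, for some j \<noteq> i, the score gap
  X = |z - mu'_j|^2 - |z - mu'_i|^2 (mu' the empirical centroids) is \<le> 0, so a union bound reduces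
  the error to pairs of classes. Writing the query and the centroids as means plus centred noise,
  X has mean |mu_j - mu_i|^2 + (v_j - v_i)/m > 0, and its deviation from the mean is a term linear
  in the query noise plus the fluctuations of |mu'_j - mu_i|^2 and |mu'_i - mu_i|^2. Chebyshev's
  inequality about the mean, P(X \<le> 0) \<le> E (X - E X)^2 / (E X)^2, leaves a second moment, computed
  by integrating first over the query and then over the independent support sets; the fluctuation
  of |mu'_c - mu_c|^2 is controlled by the fourth moment of a sum of m i.i.d. centred vectors,
  E |a_1 + ... + a_m|^4 \<le> m M_4 + 3 m (m - 1) v^2.\<close>

lemma power_le_one_plus_power4:
  fixes t :: real
  assumes "0 \<le> t" and "k \<le> 4"
  shows "t ^ k \<le> 1 + t ^ 4"
proof (cases "t \<le> 1")
  case True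
  then have "t ^ k \<le> 1" using assms(1) by (intro power_le_one)
  then show ?thesis using assms(1) by (simp add: add_increasing2)
next
  case False
  then have "t ^ k \<le> t ^ 4" using assms(2) by (intro power_increasing) auto
  then show ?thesis by simp
qed

lemma power4_sum_le_sum_of_power4:
  fixes r :: "'i \<Rightarrow> real"
  shows "(\<Sum>i\<in>I. r i) ^ 4 \<le> real (card I) ^ 3 * (\<Sum>i\<in>I. r i ^ 4)"
proof -
  have "(\<Sum>i\<in>I. r i) ^ 4 = ((\<Sum>i\<in>I. r i)\<^sup>2)\<^sup>2" by simp
  also have "\<dots> \<le> ((\<Sum>i\<in>I. (r i)\<^sup>2) * card I)\<^sup>2"
    by (intro power_mono sum_squared_le_sum_of_squares) auto
  also have "\<dots> = (\<Sum>i\<in>I. (r i)\<^sup>2)\<^sup>2 * (card I)\<^sup>2" by (simp add: power_mult_distrib)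
  also have "\<dots> \<le> (\<Sum>i\<in>I. ((r i)\<^sup>2)\<^sup>2) * card I * (card I)\<^sup>2"
    by (intro mult_right_mono sum_squared_le_sum_of_squares) auto
  also have "\<dots> = real (card I) ^ 3 * (\<Sum>i\<in>I. r i ^ 4)"
    by (simp add: power2_eq_square power3_eq_cube power4_eq_xxxx mult_ac)
  finally show ?thesis .
qed

lemma norm_diff_sq_le: "norm (x - y)^2 \<le> 2 * norm x^2 + 2 * norm (y::'a::real_inner)^2"
proof -
  have "norm (x - y)^2 + norm (x + y)^2 = 2 * norm x^2 + 2 * norm y^2"
    by (simp add: power2_norm_eq_inner inner_add inner_diff inner_commute)
  then show ?thesis by (smt (verit) zero_le_power2)
qed

lemma inner_sq_le_norm_sq_mult: "(x \<bullet> y)^2 \<le> norm x^2 * norm (y::'a::real_inner)^2"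
  by (simp add: power2_norm_eq_inner Cauchy_Schwarz_ineq)

lemma norm_add_sq: "norm (x + y)^2 = norm x^2 + 2 * (x \<bullet> y) + norm (y::'a::real_inner)^2"
  by (simp add: power2_norm_eq_inner inner_add inner_commute)

lemma integrable_dominated:
  fixes g :: "_ \<Rightarrow> 'b::{banach, second_countable_topology}" and h :: "_ \<Rightarrow> real"
  assumes "integrable M h" "g \<in> borel_measurable M" "\<And>x. x \<in> space M \<Longrightarrow> norm (g x) \<le> h x"
  shows "integrable M g"
  using assms(1,2) by (rule Bochner_Integration.integrable_bound)
    (use assms(3) in \<open>auto intro!: AE_I2 intro: order_trans[OF _ abs_ge_self]\<close>)

lemma integral_mono_nonneg_lower:
  fixes g h :: "_ \<Rightarrow> real"
  assumes "integrable M h" "\<And>x. x \<in> space M \<Longrightarrow> 0 \<le> g x" "\<And>x. x \<in> space M \<Longrightarrow> g x \<le> h x"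
  shows "integral\<^sup>L M g \<le> integral\<^sup>L M h"
  using assms by (intro integral_mono') (auto intro: order_trans)

lemma
  fixes M :: "'i \<Rightarrow> 'x measure" and g :: "'x \<Rightarrow> real"
  assumes "\<And>c. c \<in> I \<Longrightarrow> prob_space (M c)" and "j \<in> I" and "integrable (M j) g"
  shows integrable_PiM_component: "integrable (PiM I M) (\<lambda>\<omega>. g (\<omega> j))"
    and integral_PiM_component: "(\<integral>\<omega>. g (\<omega> j) \<partial>PiM I M) = integral\<^sup>L (M j) g"
proof -
  have distr: "distr (PiM I M) (M j) (\<lambda>\<omega>. \<omega> j) = M j"
    using assms(1,2) by (rule distr_PiM_component)
  have comp: "(\<lambda>\<omega>. \<omega> j) \<in> measurable (PiM I M) (M j)"
    using assms(2) by (rule measurable_component_singleton)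
  show "integrable (PiM I M) (\<lambda>\<omega>. g (\<omega> j))"
    using integrable_distr_eq[OF comp, of g] assms(3) by (simp add: distr)
  show "(\<integral>\<omega>. g (\<omega> j) \<partial>PiM I M) = integral\<^sup>L (M j) g"
    using integral_distr[OF comp, of g] assms(3) by (simp add: distr)
qed

lemma
  fixes M :: "'i \<Rightarrow> 'x measure" and g h :: "'x \<Rightarrow> real"
  assumes prob: "\<And>c. c \<in> I \<Longrightarrow> prob_space (M c)" and "finite I"
    and "j \<in> I" "k \<in> I" "j \<noteq> k" and "integrable (M j) g" "integrable (M k) h"
  shows integrable_PiM_two_components: "integrable (PiM I M) (\<lambda>\<omega>. g (\<omega> j) * h (\<omega> k))"
    and integral_PiM_two_components:
      "(\<integral>\<omega>. g (\<omega> j) * h (\<omega> k) \<partial>PiM I M) = integral\<^sup>L (M j) g * integral\<^sup>L (M k) h"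
proof -
  \<comment> \<open>product_prob_space needs a probability space at every index, also outside I.\<close>
  define M' where "M' c = (if c \<in> I then M c else count_space {undefined})" for c
  interpret factor: prob_space "M' c" for c
    using prob by (cases "c \<in> I") (auto simp: M'_def intro!: prob_spaceI)
  interpret M': product_prob_space M' I by unfold_locales
  have PiM_eq: "PiM I M' = PiM I M" by (intro PiM_cong) (auto simp: M'_def)
  define F where "F c = (if c = j then g else if c = k then h else (\<lambda>_. 1))" for c
  have F: "integrable (M' c) (F c)" if "c \<in> I" for c
  proof -
    have "integrable (M' c) (\<lambda>_. 1::real)" by simp
    then show ?thesis using that assms(6,7) by (auto simp: F_def M'_def)
  qed
  have prod_F: "(\<Prod>c\<in>I. F c (\<omega> c)) = g (\<omega> j) * h (\<omega> k)" for \<omega>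
  proof -
    have "(\<Prod>c\<in>I. F c (\<omega> c)) = F j (\<omega> j) * (F k (\<omega> k) * (\<Prod>c\<in>I - {j} - {k}. F c (\<omega> c)))"
      using assms(2-5) by (simp add: prod.remove[of I j] prod.remove[of "I - {j}" k])
    also have "(\<Prod>c\<in>I - {j} - {k}. F c (\<omega> c)) = 1" by (rule prod.neutral) (simp add: F_def)
    finally show ?thesis using assms(5) by (simp add: F_def)
  qed
  have prod_integral_F: "(\<Prod>c\<in>I. integral\<^sup>L (M' c) (F c)) = integral\<^sup>L (M j) g * integral\<^sup>L (M k) h"
  proof -
    have "(\<Prod>c\<in>I. integral\<^sup>L (M' c) (F c)) = integral\<^sup>L (M' j) (F j)
        * (integral\<^sup>L (M' k) (F k) * (\<Prod>c\<in>I - {j} - {k}. integral\<^sup>L (M' c) (F c)))"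
      using assms(2-5) by (simp add: prod.remove[of I j] prod.remove[of "I - {j}" k])
    also have "(\<Prod>c\<in>I - {j} - {k}. integral\<^sup>L (M' c) (F c)) = 1"
      by (intro prod.neutral) (simp add: F_def factor.prob_space)
    finally show ?thesis using assms(3-5) by (simp add: F_def M'_def)
  qed
  show "integrable (PiM I M) (\<lambda>\<omega>. g (\<omega> j) * h (\<omega> k))"
    using M'.product_integrable_prod[OF assms(2) F] by (simp add: prod_F PiM_eq)
  show "(\<integral>\<omega>. g (\<omega> j) * h (\<omega> k) \<partial>PiM I M) = integral\<^sup>L (M j) g * integral\<^sup>L (M k) h"
    using M'.product_integral_prod[OF assms(2) F] by (simp add: prod_F PiM_eq prod_integral_F)
qed

lemma (in prob_space) prob_nonpos_le_second_moment:
  fixes X :: "'a \<Rightarrow> real"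
  assumes [measurable]: "X \<in> borel_measurable M" and "0 < c" and "0 \<le> B"
    and moment: "(\<integral>\<^sup>+x. ennreal ((X x - c)^2) \<partial>M) \<le> ennreal B"
  shows "prob {x \<in> space M. X x \<le> 0} \<le> B / c^2"
proof -
  have "indicator {x \<in> space M. X x \<le> 0} x \<le> ennreal ((X x - c)^2) * ennreal (1 / c^2)" for x
  proof (cases "X x \<le> 0")
    case True
    then have "c^2 \<le> (X x - c)^2" using \<open>0 < c\<close> by (simp add: power2_commute power_mono)
    then show ?thesis using \<open>0 < c\<close>
      by (auto simp: indicator_def ennreal_mult'' [symmetric] simp del: ennreal_mult'')
  qed (simp add: indicator_def)
  then have "emeasure M {x \<in> space M. X x \<le> 0}
      \<le> (\<integral>\<^sup>+x. ennreal ((X x - c)^2) * ennreal (1 / c^2) \<partial>M)"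
    by (simp flip: nn_integral_indicator add: nn_integral_mono)
  also have "\<dots> = (\<integral>\<^sup>+x. ennreal ((X x - c)^2) \<partial>M) * ennreal (1 / c^2)"
    by (rule nn_integral_multc) measurable
  also have "\<dots> \<le> ennreal B * ennreal (1 / c^2)"
    using moment by (rule mult_right_mono) simp
  also have "\<dots> = ennreal (B / c^2)" using \<open>0 \<le> B\<close> by (simp flip: ennreal_mult)
  finally show ?thesis using \<open>0 \<le> B\<close> \<open>0 < c\<close> by (simp add: emeasure_eq_measure ennreal_le_iff)
qed

section \<open>Moments of sample means of a centred random vector\<close>

definition sample_mean :: "nat \<Rightarrow> ('x \<Rightarrow> 'a::real_vector) \<Rightarrow> (nat \<Rightarrow> 'x) \<Rightarrow> 'a" where
  "sample_mean m g y = (1 / real m) *\<^sub>R (\<Sum>t<m. g (y t))"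

locale centered_fourth_moment = prob_space N
  for N :: "'x measure" and a :: "'x \<Rightarrow> 'a::euclidean_space" +
  assumes borel_measurable_noise [measurable]: "a \<in> borel_measurable N"
    and integrable_norm_pow4: "integrable N (\<lambda>x. norm (a x) ^ 4)"
    and integral_noise: "integral\<^sup>L N a = 0"
begin

abbreviation tvar :: real where "tvar \<equiv> \<integral>x. norm (a x)^2 \<partial>N"

abbreviation moment4 :: real where "moment4 \<equiv> \<integral>x. norm (a x)^4 \<partial>N"

abbreviation samples :: "nat \<Rightarrow> (nat \<Rightarrow> 'x) measure" where
  "samples n \<equiv> PiM {..<n} (\<lambda>_. N)"

lemma integrable_dominated_by_pow4:
  fixes g :: "'x \<Rightarrow> 'b::{banach, second_countable_topology}"
  assumes "g \<in> borel_measurable N" and "\<And>x. norm (g x) \<le> c * (1 + norm (a x)^4)"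
  shows "integrable N g"
  by (rule integrable_dominated[where h="\<lambda>x. c * (1 + norm (a x)^4)"])
     (use integrable_norm_pow4 assms in auto)

lemma integrable_norm_power: "k \<le> 4 \<Longrightarrow> integrable N (\<lambda>x. norm (a x)^k)"
  by (rule integrable_dominated_by_pow4[where c=1]) (auto intro: power_le_one_plus_power4)

lemma integrable_noise: "integrable N a"
  by (rule integrable_dominated_by_pow4[where c=1])
     (use power_le_one_plus_power4[where k=1] in auto)

lemma integrable_norm_sq_scaleR: "integrable N (\<lambda>x. norm (a x)^2 *\<^sub>R a x)"
  by (rule integrable_dominated_by_pow4[where c=1])
     (use power_le_one_plus_power4[where k=3] in \<open>auto simp: power2_eq_square power3_eq_cube\<close>)

lemma integrable_inner_sq: "integrable N (\<lambda>x. (a x \<bullet> d)^2)"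
proof (rule integrable_dominated_by_pow4[where c="norm d^2"])
  fix x
  have "(a x \<bullet> d)^2 \<le> norm d^2 * norm (a x)^2"
    using inner_sq_le_norm_sq_mult[of "a x" d] by (simp add: mult.commute)
  also have "\<dots> \<le> norm d^2 * (1 + norm (a x)^4)"
    by (intro mult_left_mono power_le_one_plus_power4) auto
  finally show "norm ((a x \<bullet> d)^2) \<le> norm d^2 * (1 + norm (a x)^4)" by simp
qed measurable

lemma integrable_inner_scaleR: "integrable N (\<lambda>x. (a x \<bullet> d) *\<^sub>R a x)"
proof (rule integrable_dominated_by_pow4[where c="norm d"])
  fix x
  have "norm ((a x \<bullet> d) *\<^sub>R a x) \<le> (norm (a x) * norm d) * norm (a x)"
    by (simp add: mult_right_mono Cauchy_Schwarz_ineq2)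
  also have "\<dots> = norm d * norm (a x)^2" by (simp add: power2_eq_square)
  also have "\<dots> \<le> norm d * (1 + norm (a x)^4)"
    by (intro mult_left_mono power_le_one_plus_power4) auto
  finally show "norm ((a x \<bullet> d) *\<^sub>R a x) \<le> norm d * (1 + norm (a x)^4)" .
qed measurable

lemma integral_inner_noise [simp]:
  "(\<integral>x. a x \<bullet> y \<partial>N) = 0" "(\<integral>x. y \<bullet> a x \<partial>N) = 0"
  using integrable_noise by (simp_all add: integral_noise)

lemma integral_norm_add_sq: "(\<integral>y. norm (s + a y)^2 \<partial>N) = norm s^2 + tvar"
  using integrable_noise integrable_norm_power[of 2]
  by (simp add: norm_add_sq integral_add prob_space)

lemma integral_norm_add_pow4_le:
  "(\<integral>y. norm (s + a y)^4 \<partial>N)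
     \<le> norm s^4 + 6 * tvar * norm s^2 + moment4 + 4 * (s \<bullet> (\<integral>y. norm (a y)^2 *\<^sub>R a y \<partial>N))"
proof -
  define B where "B y = norm s^4 + (6 * norm s^2) * norm (a y)^2 + norm (a y)^4
      + (4 * norm s^2) * (s \<bullet> a y) + 4 * (s \<bullet> (norm (a y)^2 *\<^sub>R a y))" for y
  have "norm (s + a y)^4 \<le> B y" for y
  proof -
    have "norm (s + a y)^4 = (norm s^2 + 2 * (s \<bullet> a y) + norm (a y)^2)^2"
      by (simp flip: norm_add_sq power_mult)
    also have "\<dots> = norm s^4 + 4 * (s \<bullet> a y)^2 + norm (a y)^4 + 4 * norm s^2 * (s \<bullet> a y)
       + 2 * norm s^2 * norm (a y)^2 + 4 * (s \<bullet> a y) * norm (a y)^2"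
      by (simp add: power2_eq_square power4_eq_xxxx algebra_simps)
    also have "\<dots> \<le> B y"
      using inner_sq_le_norm_sq_mult[of s "a y"] by (simp add: B_def algebra_simps)
    finally show ?thesis .
  qed
  moreover have "integrable N B"
    unfolding B_def using integrable_noise integrable_norm_power[of 2] integrable_norm_power[of 4]
      integrable_norm_sq_scaleR
    by (intro Bochner_Integration.integrable_add Bochner_Integration.integrable_mult_right
        integrable_inner_right) auto
  ultimately have "(\<integral>y. norm (s + a y)^4 \<partial>N) \<le> integral\<^sup>L N B"
    by (intro integral_mono_nonneg_lower) auto
  also have "integral\<^sup>L N B
      = norm s^4 + 6 * tvar * norm s^2 + moment4 + 4 * (s \<bullet> (\<integral>y. norm (a y)^2 *\<^sub>R a y \<partial>N))"
    unfolding B_def using integrable_noise integrable_norm_power[of 2] integrable_norm_power[of 4]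
      integrable_norm_sq_scaleR
    by (simp add: integral_add prob_space del: inner_scaleR_right)
  finally show ?thesis .
qed


lemma prob_space_samples: "prob_space (samples n)"
  by (intro prob_space_PiM prob_space_axioms)

lemma
  fixes g :: "'x \<Rightarrow> real"
  assumes "t < n" and "integrable N g"
  shows integrable_sample: "integrable (samples n) (\<lambda>\<omega>. g (\<omega> t))"
    and integral_sample: "(\<integral>\<omega>. g (\<omega> t) \<partial>samples n) = integral\<^sup>L N g"
  using assms prob_space_axioms
  by (auto intro: integrable_PiM_component integral_PiM_component[where M="\<lambda>_. N"])

lemma integrable_norm_sum_pow4: "integrable (samples n) (\<lambda>\<omega>. norm (\<Sum>t<n. a (\<omega> t))^4)"
proof (rule integrable_dominated[where h="\<lambda>\<omega>. real n^3 * (\<Sum>t<n. norm (a (\<omega> t))^4)"])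
  show "integrable (samples n) (\<lambda>\<omega>. real n^3 * (\<Sum>t<n. norm (a (\<omega> t))^4))"
    using integrable_norm_power[of 4]
    by (intro Bochner_Integration.integrable_mult_right Bochner_Integration.integrable_sum
        integrable_sample) auto
  fix \<omega>
  have "norm (\<Sum>t<n. a (\<omega> t))^4 \<le> (\<Sum>t<n. norm (a (\<omega> t)))^4"
    by (intro power_mono norm_sum) auto
  also have "\<dots> \<le> real n^3 * (\<Sum>t<n. norm (a (\<omega> t))^4)"
    using power4_sum_le_sum_of_power4[of "\<lambda>t. norm (a (\<omega> t))" "{..<n}"] by simp
  finally show "norm (norm (\<Sum>t<n. a (\<omega> t))^4) \<le> real n^3 * (\<Sum>t<n. norm (a (\<omega> t))^4)"
    by simp
qed measurable

lemma integrable_norm_sum_sq: "integrable (samples n) (\<lambda>\<omega>. norm (\<Sum>t<n. a (\<omega> t))^2)"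
proof (rule integrable_dominated[where h="\<lambda>\<omega>. 1 + norm (\<Sum>t<n. a (\<omega> t))^4"])
  interpret samples: prob_space "samples n" by (rule prob_space_samples)
  show "integrable (samples n) (\<lambda>\<omega>. 1 + norm (\<Sum>t<n. a (\<omega> t))^4)"
    using integrable_norm_sum_pow4 by auto
qed (auto intro: power_le_one_plus_power4)

lemma
  shows integrable_inner_sum: "integrable (samples n) (\<lambda>\<omega>. (\<Sum>t<n. a (\<omega> t)) \<bullet> y)"
    and integral_inner_sum: "(\<integral>\<omega>. (\<Sum>t<n. a (\<omega> t)) \<bullet> y \<partial>samples n) = 0"
proof -
  have int: "integrable (samples n) (\<lambda>\<omega>. a (\<omega> t) \<bullet> y)" if "t < n" for t
    using that integrable_noise by (intro integrable_sample) auto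
  then show "integrable (samples n) (\<lambda>\<omega>. (\<Sum>t<n. a (\<omega> t)) \<bullet> y)"
    unfolding inner_sum_left by (intro Bochner_Integration.integrable_sum) auto
  have "(\<integral>\<omega>. a (\<omega> t) \<bullet> y \<partial>samples n) = 0" if "t < n" for t
    using that integrable_noise by (subst integral_sample) auto
  with int show "(\<integral>\<omega>. (\<Sum>t<n. a (\<omega> t)) \<bullet> y \<partial>samples n) = 0"
    unfolding inner_sum_left by (subst Bochner_Integration.integral_sum) auto
qed

lemma integral_samples_Suc:
  fixes g :: "'a \<Rightarrow> real"
  assumes "integrable (samples (Suc n)) (\<lambda>\<omega>. g (\<Sum>t<Suc n. a (\<omega> t)))"
  shows "(\<integral>\<omega>. g (\<Sum>t<Suc n. a (\<omega> t)) \<partial>samples (Suc n))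
    = (\<integral>\<omega>. (\<integral>y. g ((\<Sum>t<n. a (\<omega> t)) + a y) \<partial>N) \<partial>samples n)"
proof -
  interpret product_sigma_finite "\<lambda>_::nat. N"
    by unfold_locales
  have "(\<integral>\<omega>. g (\<Sum>t<Suc n. a (\<omega> t)) \<partial>samples (Suc n))
      = (\<integral>x. (\<integral>y. g (\<Sum>t<Suc n. a ((x(n := y)) t)) \<partial>N) \<partial>samples n)"
    using assms by (simp add: lessThan_Suc product_integral_insert)
  also have "(\<lambda>x y. g (\<Sum>t<Suc n. a ((x(n := y)) t))) = (\<lambda>\<omega> y. g ((\<Sum>t<n. a (\<omega> t)) + a y))"
    by (intro ext arg_cong[where f=g]) (simp add: add.commute)
  finally show ?thesis .
qed

lemma integral_norm_sum_sq: "(\<integral>\<omega>. norm (\<Sum>t<n. a (\<omega> t))^2 \<partial>samples n) = n * tvar"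
proof (induction n)
  case (Suc n)
  interpret samples: prob_space "samples n" by (rule prob_space_samples)
  have "(\<integral>\<omega>. norm (\<Sum>t<Suc n. a (\<omega> t))^2 \<partial>samples (Suc n))
      = (\<integral>\<omega>. (\<integral>y. norm ((\<Sum>t<n. a (\<omega> t)) + a y)^2 \<partial>N) \<partial>samples n)"
    using integrable_norm_sum_sq by (rule integral_samples_Suc)
  also have "\<dots> = (\<integral>\<omega>. norm (\<Sum>t<n. a (\<omega> t))^2 + tvar \<partial>samples n)"
    by (simp add: integral_norm_add_sq)
  also have "\<dots> = Suc n * tvar"
    using integrable_norm_sum_sq Suc.IH by (simp add: samples.prob_space algebra_simps)
  finally show ?case .
qed simp

lemma integral_norm_sum_pow4_le:
  "(\<integral>\<omega>. norm (\<Sum>t<n. a (\<omega> t))^4 \<partial>samples n) \<le> n * moment4 + 3 * n * (real n - 1) * tvar^2"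
proof (induction n)
  case (Suc n)
  interpret samples: prob_space "samples n" by (rule prob_space_samples)
  define \<tau> where "\<tau> = (\<integral>y. norm (a y)^2 *\<^sub>R a y \<partial>N)"
  let ?S = "\<lambda>\<omega>. \<Sum>t<n. a (\<omega> t)"
  have "(\<integral>\<omega>. norm (\<Sum>t<Suc n. a (\<omega> t))^4 \<partial>samples (Suc n))
      = (\<integral>\<omega>. (\<integral>y. norm (?S \<omega> + a y)^4 \<partial>N) \<partial>samples n)"
    using integrable_norm_sum_pow4 by (rule integral_samples_Suc)
  also have "\<dots> \<le> (\<integral>\<omega>. norm (?S \<omega>)^4 + 6 * tvar * norm (?S \<omega>)^2 + moment4
      + 4 * (?S \<omega> \<bullet> \<tau>) \<partial>samples n)"
    using integrable_norm_sum_pow4 integrable_norm_sum_sq integrable_inner_sum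
    by (intro integral_mono_nonneg_lower) (auto simp: \<tau>_def intro: integral_norm_add_pow4_le)
  also have "\<dots> = (\<integral>\<omega>. norm (?S \<omega>)^4 \<partial>samples n) + 6 * tvar * (n * tvar) + moment4"
    using integrable_norm_sum_pow4 integrable_norm_sum_sq integrable_inner_sum integral_inner_sum
    by (simp add: integral_norm_sum_sq samples.prob_space)
  also have "\<dots> \<le> (n * moment4 + 3 * n * (real n - 1) * tvar^2) + 6 * tvar * (n * tvar) + moment4"
    using Suc.IH by simp
  also have "\<dots> = Suc n * moment4 + 3 * Suc n * (real (Suc n) - 1) * tvar^2"
    by (simp add: algebra_simps power2_eq_square)
  finally show ?case by simp
qed simp


lemma sample_mean_eq: "sample_mean m a \<omega> = (1 / real m) *\<^sub>R (\<Sum>t<m. a (\<omega> t))"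
  by (simp add: sample_mean_def)

lemma borel_measurable_sample_mean [measurable]: "sample_mean m a \<in> borel_measurable (samples m)"
  unfolding sample_mean_def[abs_def] by measurable

lemma
  shows integrable_inner_sample_mean: "integrable (samples m) (\<lambda>\<omega>. d \<bullet> sample_mean m a \<omega>)"
    and integral_inner_sample_mean: "(\<integral>\<omega>. d \<bullet> sample_mean m a \<omega> \<partial>samples m) = 0"
  using integrable_inner_sum[of m d] integral_inner_sum[of m d]
  by (simp_all add: sample_mean_eq inner_commute)

lemma
  shows integrable_norm_sample_mean_sq: "integrable (samples m) (\<lambda>\<omega>. norm (sample_mean m a \<omega>)^2)"
    and integral_norm_sample_mean_sq: "(\<integral>\<omega>. norm (sample_mean m a \<omega>)^2 \<partial>samples m) = tvar / m"
  using integrable_norm_sum_sq[of m] integral_norm_sum_sq[of m]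
  by (simp_all add: sample_mean_eq power_divide power2_eq_square)

lemma
  shows integrable_inner_sample_mean_sq: "integrable (samples m) (\<lambda>\<omega>. (d \<bullet> sample_mean m a \<omega>)^2)"
    and integral_inner_sample_mean_sq_le:
      "(\<integral>\<omega>. (d \<bullet> sample_mean m a \<omega>)^2 \<partial>samples m) \<le> norm d^2 * tvar / m"
proof -
  have bound: "(d \<bullet> sample_mean m a \<omega>)^2 \<le> norm d^2 * norm (sample_mean m a \<omega>)^2" for \<omega>
    by (rule inner_sq_le_norm_sq_mult)
  have int_bound: "integrable (samples m) (\<lambda>\<omega>. norm d^2 * norm (sample_mean m a \<omega>)^2)"
    using integrable_norm_sample_mean_sq by simp
  show int: "integrable (samples m) (\<lambda>\<omega>. (d \<bullet> sample_mean m a \<omega>)^2)"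
    by (rule integrable_dominated[OF int_bound]) (use bound in simp_all)
  have "(\<integral>\<omega>. (d \<bullet> sample_mean m a \<omega>)^2 \<partial>samples m)
      \<le> (\<integral>\<omega>. norm d^2 * norm (sample_mean m a \<omega>)^2 \<partial>samples m)"
    using int int_bound bound by (rule integral_mono)
  also have "\<dots> = norm d^2 * tvar / m" by (simp add: integral_norm_sample_mean_sq)
  finally show "(\<integral>\<omega>. (d \<bullet> sample_mean m a \<omega>)^2 \<partial>samples m) \<le> norm d^2 * tvar / m" .
qed

lemma
  assumes "1 \<le> m"
  shows integrable_norm_sample_mean_sq_deviation:
      "integrable (samples m) (\<lambda>\<omega>. (norm (sample_mean m a \<omega>)^2 - tvar / m)^2)"
    and integral_norm_sample_mean_sq_deviation_le:
      "(\<integral>\<omega>. (norm (sample_mean m a \<omega>)^2 - tvar / m)^2 \<partial>samples m)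
         \<le> (moment4 + 2 * (real m - 1) * tvar^2) / real m^3"
proof -
  interpret samples: prob_space "samples m" by (rule prob_space_samples)
  let ?S = "\<lambda>\<omega>. \<Sum>t<m. a (\<omega> t)"
  have m: "0 < real m" using assms by simp
  have norm_pow4: "norm (sample_mean m a \<omega>)^4 = norm (?S \<omega>)^4 / real m^4" for \<omega>
    by (simp add: sample_mean_eq power_divide)
  have int4: "integrable (samples m) (\<lambda>\<omega>. (norm (sample_mean m a \<omega>)^2)^2)"
    using integrable_norm_sum_pow4 by (simp add: norm_pow4 flip: power_mult)
  have "(\<integral>\<omega>. (norm (sample_mean m a \<omega>)^2 - tvar / m)^2 \<partial>samples m)
      = (\<integral>\<omega>. norm (?S \<omega>)^4 \<partial>samples m) / real m^4 - (tvar / m)^2"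
    using samples.variance_eq[OF integrable_norm_sample_mean_sq int4]
    by (simp add: integral_norm_sample_mean_sq norm_pow4)
  also have "\<dots> \<le> (m * moment4 + 3 * m * (real m - 1) * tvar^2) / real m^4 - (tvar / m)^2"
    using integral_norm_sum_pow4_le[of m] by (intro diff_right_mono divide_right_mono) auto
  also have "\<dots> = (moment4 + (2 * real m - 3) * tvar^2) / real m^3"
    using m by (simp add: field_simps power2_eq_square power3_eq_cube power4_eq_xxxx)
  also have "\<dots> \<le> (moment4 + 2 * (real m - 1) * tvar^2) / real m^3"
    by (intro divide_right_mono add_left_mono mult_right_mono) auto
  finally show "(\<integral>\<omega>. (norm (sample_mean m a \<omega>)^2 - tvar / m)^2 \<partial>samples m)
      \<le> (moment4 + 2 * (real m - 1) * tvar^2) / real m^3" .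
  show "integrable (samples m) (\<lambda>\<omega>. (norm (sample_mean m a \<omega>)^2 - tvar / m)^2)"
    using int4 integrable_norm_sample_mean_sq by (simp add: power2_diff)
qed


definition norm_sq_fluctuation :: "nat \<Rightarrow> 'a \<Rightarrow> (nat \<Rightarrow> 'x) \<Rightarrow> real" where
  "norm_sq_fluctuation m d \<omega> = norm (d + sample_mean m a \<omega>)^2 - (norm d^2 + tvar / m)"

lemma norm_sq_fluctuation_eq:
  "norm_sq_fluctuation m d \<omega>
    = 2 * (d \<bullet> sample_mean m a \<omega>) + (norm (sample_mean m a \<omega>)^2 - tvar / m)"
  by (simp add: norm_sq_fluctuation_def norm_add_sq)

lemma
  shows integrable_norm_sq_fluctuation: "integrable (samples m) (norm_sq_fluctuation m d)"
    and integral_norm_sq_fluctuation: "integral\<^sup>L (samples m) (norm_sq_fluctuation m d) = 0"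
proof -
  interpret samples: prob_space "samples m" by (rule prob_space_samples)
  show "integrable (samples m) (norm_sq_fluctuation m d)"
    using integrable_inner_sample_mean integrable_norm_sample_mean_sq
    by (simp add: norm_sq_fluctuation_eq[abs_def])
  show "integral\<^sup>L (samples m) (norm_sq_fluctuation m d) = 0"
    using integrable_inner_sample_mean integrable_norm_sample_mean_sq
    by (simp add: norm_sq_fluctuation_eq[abs_def] integral_inner_sample_mean
        integral_norm_sample_mean_sq samples.prob_space)
qed

lemma
  assumes "1 \<le> m"
  shows integrable_norm_sq_fluctuation_sq:
      "integrable (samples m) (\<lambda>\<omega>. norm_sq_fluctuation m d \<omega>^2)"
    and integral_norm_sq_fluctuation_sq_le:
      "(\<integral>\<omega>. norm_sq_fluctuation m d \<omega>^2 \<partial>samples m)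
         \<le> 6 * norm d^2 * tvar / m + 3 * (moment4 + 2 * (real m - 1) * tvar^2) / real m^3"
proof -
  define B where
    "B \<omega> = 6 * (d \<bullet> sample_mean m a \<omega>)^2 + 3 * (norm (sample_mean m a \<omega>)^2 - tvar / m)^2"
    for \<omega>
  have bound: "norm_sq_fluctuation m d \<omega>^2 \<le> B \<omega>" for \<omega>
  proof -
    have "(2 * p + q)^2 \<le> 6 * p^2 + 3 * q^2" for p q :: real
      using zero_le_power2[of "p - q"] by (simp add: power2_eq_square algebra_simps)
    then show ?thesis by (simp add: B_def norm_sq_fluctuation_eq)
  qed
  have int_B: "integrable (samples m) B"
    unfolding B_def
    using integrable_inner_sample_mean_sq integrable_norm_sample_mean_sq_deviation[OF assms]
    by simp
  show int: "integrable (samples m) (\<lambda>\<omega>. norm_sq_fluctuation m d \<omega>^2)"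
  proof (rule integrable_dominated[OF int_B])
    show "(\<lambda>\<omega>. norm_sq_fluctuation m d \<omega>^2) \<in> borel_measurable (samples m)"
      unfolding norm_sq_fluctuation_def by measurable
  qed (use bound in simp)
  have "(\<integral>\<omega>. norm_sq_fluctuation m d \<omega>^2 \<partial>samples m) \<le> integral\<^sup>L (samples m) B"
    using int int_B bound by (rule integral_mono)
  also have "\<dots> = 6 * (\<integral>\<omega>. (d \<bullet> sample_mean m a \<omega>)^2 \<partial>samples m)
      + 3 * (\<integral>\<omega>. (norm (sample_mean m a \<omega>)^2 - tvar / m)^2 \<partial>samples m)"
    unfolding B_def
    using integrable_inner_sample_mean_sq integrable_norm_sample_mean_sq_deviation[OF assms]
    by simp
  also have "\<dots> \<le> 6 * (norm d^2 * tvar / m) + 3 * ((moment4 + 2 * (real m - 1) * tvar^2) / real m^3)"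
    using integral_inner_sample_mean_sq_le integral_norm_sample_mean_sq_deviation_le[OF assms]
    by (intro add_mono mult_left_mono) auto
  finally show "(\<integral>\<omega>. norm_sq_fluctuation m d \<omega>^2 \<partial>samples m)
      \<le> 6 * norm d^2 * tvar / m + 3 * (moment4 + 2 * (real m - 1) * tvar^2) / real m^3"
    by simp
qed

lemma
  shows integrable_const_minus_inner_sq: "integrable N (\<lambda>x. (Y - 2 * (a x \<bullet> w))^2)"
    and integral_const_minus_inner_sq:
      "(\<integral>x. (Y - 2 * (a x \<bullet> w))^2 \<partial>N) = Y^2 + 4 * (\<integral>x. (a x \<bullet> w)^2 \<partial>N)"
proof -
  have expand: "(Y - 2 * (a x \<bullet> w))^2 = Y^2 - 4 * Y * (a x \<bullet> w) + 4 * (a x \<bullet> w)^2" for x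
    by (simp add: power2_eq_square algebra_simps)
  show "integrable N (\<lambda>x. (Y - 2 * (a x \<bullet> w))^2)"
    unfolding expand using integrable_noise integrable_inner_sq by simp
  show "(\<integral>x. (Y - 2 * (a x \<bullet> w))^2 \<partial>N) = Y^2 + 4 * (\<integral>x. (a x \<bullet> w)^2 \<partial>N)"
    unfolding expand using integrable_noise integrable_inner_sq by (simp add: prob_space)
qed

lemma integral_inner_add_sq_le:
  "(\<integral>x. (a x \<bullet> (d + e))^2 \<partial>N)
     \<le> (\<integral>x. (a x \<bullet> d)^2 \<partial>N) + 2 * (e \<bullet> (\<integral>x. (a x \<bullet> d) *\<^sub>R a x \<partial>N)) + tvar * norm e^2"
proof -
  have expand: "(a x \<bullet> (d + e))^2 = (a x \<bullet> d)^2 + 2 * (e \<bullet> ((a x \<bullet> d) *\<^sub>R a x)) + (a x \<bullet> e)^2" for x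
    by (simp add: power2_eq_square algebra_simps inner_add_right inner_commute)
  have "(\<integral>x. (a x \<bullet> (d + e))^2 \<partial>N)
      = (\<integral>x. (a x \<bullet> d)^2 \<partial>N) + 2 * (e \<bullet> (\<integral>x. (a x \<bullet> d) *\<^sub>R a x \<partial>N)) + (\<integral>x. (a x \<bullet> e)^2 \<partial>N)"
    unfolding expand using integrable_inner_sq integrable_inner_scaleR
    by (simp del: inner_scaleR_right)
  also have "(\<integral>x. (a x \<bullet> e)^2 \<partial>N) \<le> (\<integral>x. norm (a x)^2 * norm e^2 \<partial>N)"
    using integrable_inner_sq integrable_norm_power[of 2] inner_sq_le_norm_sq_mult
    by (intro integral_mono) auto
  finally show ?thesis by simp
qed

lemma
  assumes "1 \<le> m"
  shows integrable_sample_mean_combination: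
      "integrable (samples m)
         (\<lambda>y. w \<bullet> sample_mean m a y + c * norm (sample_mean m a y)^2 + norm_sq_fluctuation m d y^2)"
    and integral_sample_mean_combination_le:
      "(\<integral>y. w \<bullet> sample_mean m a y + c * norm (sample_mean m a y)^2 + norm_sq_fluctuation m d y^2
          \<partial>samples m)
       \<le> c * tvar / m + 6 * norm d^2 * tvar / m
         + 3 * (moment4 + 2 * (real m - 1) * tvar^2) / real m^3"
proof -
  show "integrable (samples m)
      (\<lambda>y. w \<bullet> sample_mean m a y + c * norm (sample_mean m a y)^2 + norm_sq_fluctuation m d y^2)"
    using integrable_inner_sample_mean integrable_norm_sample_mean_sq
      integrable_norm_sq_fluctuation_sq[OF assms] by simp
  then show "(\<integral>y. w \<bullet> sample_mean m a y + c * norm (sample_mean m a y)^2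
          + norm_sq_fluctuation m d y^2
          \<partial>samples m)
       \<le> c * tvar / m + 6 * norm d^2 * tvar / m
         + 3 * (moment4 + 2 * (real m - 1) * tvar^2) / real m^3"
    using integrable_inner_sample_mean integrable_norm_sample_mean_sq
      integrable_norm_sq_fluctuation_sq[OF assms] integral_norm_sq_fluctuation_sq_le[OF assms]
    by (simp add: integral_inner_sample_mean integral_norm_sample_mean_sq)
qed

end

section \<open>Nearest-centroid classification\<close>

lemma ncc_pred_misclassified:
  fixes mu :: "nat \<Rightarrow> 'a::euclidean_space"
  assumes "tie_rule tb" and "i < C" and "ncc_pred tb C mu z \<noteq> i"
  obtains j where "j < C" "j \<noteq> i" "norm (z - mu j)^2 \<le> norm (z - mu i)^2"
proof -
  define K where "K = {c. c < C \<and> (\<forall>c'<C. norm (z - mu c)^2 \<le> norm (z - mu c')^2)}"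
  let ?c = "arg_min_on (\<lambda>c. norm (z - mu c)^2) {..<C}"
  have "?c < C"
    using assms(2) arg_min_if_finite(1)[of "{..<C}"] by auto
  moreover have "norm (z - mu ?c)^2 \<le> norm (z - mu c')^2" if "c' < C" for c'
    using assms(2) that by (intro arg_min_least) auto
  ultimately have "?c \<in> K" by (simp add: K_def)
  then have "ncc_pred tb C mu z \<in> K"
    using assms(1) unfolding tie_rule_def ncc_pred_def K_def[symmetric] by blast
  then show ?thesis
    using that assms(2,3) unfolding K_def by auto
qed

lemma emp_centroid_eq_add_sample_mean:
  assumes "1 \<le> m"
  shows "emp_centroid m f S c = mu + sample_mean m (\<lambda>x. f x - mu) (S c)"
proof -
  have "sample_mean m (\<lambda>x. f x - mu) (S c) = emp_centroid m f S c - (1 / real m) *\<^sub>R (\<Sum>t<m. mu)"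
    by (simp add: sample_mean_def emp_centroid_def sum_subtractf scaleR_diff_right)
  also have "(\<Sum>t<m. mu) = real m *\<^sub>R mu" by (simp add: sum_constant_scaleR)
  also have "(1 / real m) *\<^sub>R (real m *\<^sub>R mu) = mu" using assms by simp
  finally show ?thesis by simp
qed

locale ncc_model =
  fixes C m :: nat and D :: "nat \<Rightarrow> 'x measure" and f :: "'x \<Rightarrow> 'a::euclidean_space"
  assumes one_le_shots: "1 \<le> m"
    and prob_space_class: "\<And>c. c < C \<Longrightarrow> prob_space (D c)"
    and borel_measurable_feature: "\<And>c. c < C \<Longrightarrow> f \<in> borel_measurable (D c)"
    and integrable_feature_pow4:
      "\<And>c. c < C \<Longrightarrow> integrable (D c) (\<lambda>x. norm (f x - feat_mean (D c) f)^4)"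
begin

abbreviation \<mu> :: "nat \<Rightarrow> 'a" where "\<mu> c \<equiv> feat_mean (D c) f"

abbreviation noise :: "nat \<Rightarrow> 'x \<Rightarrow> 'a" where "noise c x \<equiv> f x - \<mu> c"

abbreviation shots :: "nat \<Rightarrow> (nat \<Rightarrow> 'x) measure" where "shots c \<equiv> PiM {..<m} (\<lambda>_. D c)"

abbreviation SM :: "(nat \<Rightarrow> nat \<Rightarrow> 'x) measure" where "SM \<equiv> support_measure C m D"

lemma centered_fourth_moment_class:
  assumes "c < C"
  shows "centered_fourth_moment (D c) (noise c)"
proof -
  interpret prob_space "D c" using assms by (rule prob_space_class)
  have [measurable]: "f \<in> borel_measurable (D c)" using assms by (rule borel_measurable_feature)
  have "integrable (D c) (noise c)"
  proof (rule integrable_dominated[where h="\<lambda>x. 1 + norm (noise c x)^4"])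
    show "integrable (D c) (\<lambda>x. 1 + norm (noise c x)^4)"
      using integrable_feature_pow4[OF assms] by simp
    show "noise c \<in> borel_measurable (D c)" by measurable
    show "norm (noise c x) \<le> 1 + norm (noise c x)^4" for x
      using power_le_one_plus_power4[where k=1] by simp
  qed
  then have "integrable (D c) f"
    using Bochner_Integration.integrable_add[of "D c" "noise c" "\<lambda>_. \<mu> c"] by simp
  then have "integral\<^sup>L (D c) (noise c) = 0"
    by (simp add: prob_space feat_mean_def)
  moreover have "noise c \<in> borel_measurable (D c)" by measurable
  ultimately show ?thesis
    using integrable_feature_pow4[OF assms]
    by (intro centered_fourth_moment.intro centered_fourth_moment_axioms.intro prob_space_axioms)
qed

lemma prob_space_shots: "c < C \<Longrightarrow> prob_space (shots c)"
  using centered_fourth_moment.prob_space_samples[OF centered_fourth_moment_class] .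

lemma support_measure_eq: "SM = PiM {..<C} shots"
  by (simp add: support_measure_def)

lemma prob_space_support: "prob_space SM"
  unfolding support_measure_eq by (intro prob_space_PiM prob_space_shots) simp

lemma borel_measurable_emp_centroid:
  assumes "c < C"
  shows "(\<lambda>S. emp_centroid m f S c) \<in> borel_measurable SM"
proof -
  have "(\<lambda>S. f (S c t)) \<in> borel_measurable SM" if "t < m" for t
  proof -
    have "(\<lambda>S. S c) \<in> measurable SM (shots c)"
      unfolding support_measure_eq using assms by (intro measurable_component_singleton) simp
    moreover have "(\<lambda>y. y t) \<in> measurable (shots c) (D c)"
      using that by (intro measurable_component_singleton) simp
    ultimately have "(\<lambda>S. S c t) \<in> measurable SM (D c)"
      by (rule measurable_compose)
    then show ?thesis
      using borel_measurable_feature[OF assms] by (rule measurable_compose)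
  qed
  then show ?thesis
    unfolding emp_centroid_def by (intro borel_measurable_scaleR borel_measurable_sum) auto
qed

definition score_gap :: "nat \<Rightarrow> nat \<Rightarrow> (nat \<Rightarrow> nat \<Rightarrow> 'x) \<times> 'x \<Rightarrow> real" where
  "score_gap i j \<omega> = norm (f (snd \<omega>) - emp_centroid m f (fst \<omega>) j)^2
     - norm (f (snd \<omega>) - emp_centroid m f (fst \<omega>) i)^2"

definition confusion_event :: "nat \<Rightarrow> nat \<Rightarrow> ((nat \<Rightarrow> nat \<Rightarrow> 'x) \<times> 'x) set" where
  "confusion_event i j = {\<omega> \<in> space (SM \<Otimes>\<^sub>M D i). score_gap i j \<omega> \<le> 0}"

lemma
  assumes "i < C" "j < C"
  shows borel_measurable_score_gap: "score_gap i j \<in> borel_measurable (SM \<Otimes>\<^sub>M D i)"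
    and sets_confusion_event: "confusion_event i j \<in> sets (SM \<Otimes>\<^sub>M D i)"
proof -
  have [measurable]: "(\<lambda>\<omega>. f (snd \<omega>)) \<in> borel_measurable (SM \<Otimes>\<^sub>M D i)"
    using borel_measurable_feature[OF assms(1)] by measurable
  have [measurable]: "(\<lambda>\<omega>. emp_centroid m f (fst \<omega>) c) \<in> borel_measurable (SM \<Otimes>\<^sub>M D i)"
    if "c < C" for c
    using borel_measurable_emp_centroid[OF that] by measurable
  show "score_gap i j \<in> borel_measurable (SM \<Otimes>\<^sub>M D i)"
    unfolding score_gap_def[abs_def] using assms by measurable
  then show "confusion_event i j \<in> sets (SM \<Otimes>\<^sub>M D i)"
    unfolding confusion_event_def by measurable
qed

lemma measure_misclassified_le:
  assumes "tie_rule tb" and "i < C"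
  shows "measure (SM \<Otimes>\<^sub>M D i)
      {\<omega> \<in> space (SM \<Otimes>\<^sub>M D i). ncc_pred tb C (emp_centroid m f (fst \<omega>)) (f (snd \<omega>)) \<noteq> i}
    \<le> (\<Sum>j\<in>{..<C} - {i}. measure (SM \<Otimes>\<^sub>M D i) (confusion_event i j))"
proof -
  interpret prob_space "SM \<Otimes>\<^sub>M D i"
    using prob_space_support prob_space_class[OF assms(2)] by (intro prob_space_pair)
  have sets: "confusion_event i ` ({..<C} - {i}) \<subseteq> sets (SM \<Otimes>\<^sub>M D i)"
    using assms(2) sets_confusion_event by auto
  have "{\<omega> \<in> space (SM \<Otimes>\<^sub>M D i). ncc_pred tb C (emp_centroid m f (fst \<omega>)) (f (snd \<omega>)) \<noteq> i}
      \<subseteq> (\<Union>j\<in>{..<C} - {i}. confusion_event i j)"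
    by (auto simp: confusion_event_def score_gap_def elim!: ncc_pred_misclassified[OF assms])
  then have "measure (SM \<Otimes>\<^sub>M D i)
      {\<omega> \<in> space (SM \<Otimes>\<^sub>M D i). ncc_pred tb C (emp_centroid m f (fst \<omega>)) (f (snd \<omega>)) \<noteq> i}
    \<le> measure (SM \<Otimes>\<^sub>M D i) (\<Union>j\<in>{..<C} - {i}. confusion_event i j)"
    using sets by (intro finite_measure_mono) auto
  also have "\<dots> \<le> (\<Sum>j\<in>{..<C} - {i}. measure (SM \<Otimes>\<^sub>M D i) (confusion_event i j))"
    using sets by (intro finite_measure_subadditive_finite) auto
  finally show ?thesis .
qed

lemma ncc_err_le_sum_pair_bounds:
  assumes "tie_rule tb"
    and "\<And>i j. i < C \<Longrightarrow> j < C \<Longrightarrow> i \<noteq> j \<Longrightarrow>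
      measure (SM \<Otimes>\<^sub>M D i) (confusion_event i j) \<le> b\<^sub>1 i j + b\<^sub>2 i j"
  shows "ncc_err tb C m D f
    \<le> (1 / real C) * (\<Sum>i<C. \<Sum>j\<in>{..<C} - {i}. b\<^sub>1 i j)
      + (1 / real C) * (\<Sum>i<C. \<Sum>j\<in>{..<C} - {i}. b\<^sub>2 i j)"
proof -
  have "ncc_err tb C m D f
      \<le> (1 / real C) * (\<Sum>i<C. \<Sum>j\<in>{..<C} - {i}. measure (SM \<Otimes>\<^sub>M D i) (confusion_event i j))"
    unfolding ncc_err_def using measure_misclassified_le[OF assms(1)]
    by (intro mult_left_mono sum_mono) auto
  also have "\<dots> \<le> (1 / real C) * (\<Sum>i<C. \<Sum>j\<in>{..<C} - {i}. b\<^sub>1 i j + b\<^sub>2 i j)"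
    using assms(2) by (intro mult_left_mono sum_mono) auto
  finally show ?thesis by (simp add: sum.distrib distrib_left)
qed

end

subsection \<open>Chebyshev bound for one pair of classes\<close>

lemma norm_sq_diff_centroids_eq:
  fixes z d p q :: "'a::real_inner"
  shows "norm (z - (d + p))^2 - norm (z - q)^2 - (norm d^2 + (r - s))
    = (norm (d + p)^2 - (norm d^2 + r)) - (norm q^2 - s) - 2 * (z \<bullet> (d + (p - q)))"
  by (simp add: power2_norm_eq_inner inner_add inner_diff inner_commute algebra_simps)

lemma pair_moment_terms_le:
  fixes vi vj dd Mi Mj :: real and m :: nat
  assumes "0 \<le> vi" "0 \<le> vj" "0 \<le> dd" "1 \<le> m"
  shows "8 * vi * vj / m + 6 * dd * vj / m + 3 * (Mj + 2 * (real m - 1) * vj^2) / real m^3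
      + (8 * vi * vi / m + 3 * (Mi + 2 * (real m - 1) * vi^2) / real m^3)
    \<le> 12 * (vi + vj)^2 / m + 6 * dd * (vi + vj) / m
      + 3 / real m^3 * (Mi + Mj + 2 * (real m - 1) * (vi + vj)^2)"
proof -
  have "(8 * vi * vj + 8 * vi * vi) / m \<le> 12 * (vi + vj)^2 / m"
    using assms by (intro divide_right_mono) (simp_all add: power2_eq_square algebra_simps)
  moreover have "6 * dd * vj / m \<le> 6 * dd * (vi + vj) / m"
    using assms by (intro divide_right_mono) (simp_all add: algebra_simps)
  moreover have "(real m - 1) * (vi^2 + vj^2) \<le> (real m - 1) * (vi + vj)^2"
    using assms by (intro mult_left_mono) (simp_all add: power2_eq_square algebra_simps)
  then have "3 * (Mj + 2 * (real m - 1) * vj^2) + 3 * (Mi + 2 * (real m - 1) * vi^2)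
      \<le> 3 * (Mi + Mj + 2 * (real m - 1) * (vi + vj)^2)"
    by (simp add: algebra_simps)
  then have "3 * (Mj + 2 * (real m - 1) * vj^2) / real m^3
      + 3 * (Mi + 2 * (real m - 1) * vi^2) / real m^3
      \<le> 3 / real m^3 * (Mi + Mj + 2 * (real m - 1) * (vi + vj)^2)"
    by (simp add: divide_right_mono flip: add_divide_distrib)
  ultimately show ?thesis by (simp add: add_divide_distrib)
qed

locale ncc_pair = ncc_model +
  fixes i j :: nat
  assumes i_lt_C: "i < C" and j_lt_C: "j < C" and i_neq_j: "i \<noteq> j"
    and means_distinct: "\<mu> i \<noteq> \<mu> j"
    and margin_pos: "0 < norm (\<mu> j - \<mu> i)^2 + (feat_tvar (D j) f - feat_tvar (D i) f) / m"
begin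

sublocale class_i: centered_fourth_moment "D i" "noise i"
  using i_lt_C by (rule centered_fourth_moment_class)

sublocale class_j: centered_fourth_moment "D j" "noise j"
  using j_lt_C by (rule centered_fourth_moment_class)

abbreviation \<delta> where "\<delta> \<equiv> \<mu> j - \<mu> i"

abbreviation margin :: real where
  "margin \<equiv> norm \<delta>^2 + (feat_tvar (D j) f - feat_tvar (D i) f) / m"

abbreviation \<epsilon> where "\<epsilon> c y \<equiv> sample_mean m (noise c) y"

abbreviation \<kappa> where "\<kappa> \<equiv> \<integral>x. (noise i x \<bullet> \<delta>) *\<^sub>R noise i x \<partial>D i"

abbreviation fluct_j where "fluct_j \<equiv> class_j.norm_sq_fluctuation m \<delta>"

abbreviation fluct_i where "fluct_i \<equiv> class_i.norm_sq_fluctuation m 0"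

text \<open>The margin is the mean of the score gap; the deviation from it is linear in the query noise
  plus the fluctuations of the two centroids.\<close>

lemma score_gap_sub_margin:
  "score_gap i j (S, x) - margin
     = fluct_j (S j) - fluct_i (S i) - 2 * (noise i x \<bullet> (\<delta> + (\<epsilon> j (S j) - \<epsilon> i (S i))))"
proof -
  have "emp_centroid m f S c = \<mu> c + \<epsilon> c (S c)" for c
    using one_le_shots by (rule emp_centroid_eq_add_sample_mean)
  then have to_j: "f x - emp_centroid m f S j = noise i x - (\<delta> + \<epsilon> j (S j))"
    and to_i: "f x - emp_centroid m f S i = noise i x - \<epsilon> i (S i)"
    by (simp_all add: algebra_simps)
  have "score_gap i j (S, x) - margin = norm (noise i x - (\<delta> + \<epsilon> j (S j)))^2
      - norm (noise i x - \<epsilon> i (S i))^2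
      - (norm \<delta>^2 + (feat_tvar (D j) f / m - feat_tvar (D i) f / m))"
    unfolding score_gap_def fst_conv snd_conv to_j to_i by (simp add: diff_divide_distrib)
  then show ?thesis
    unfolding norm_sq_diff_centroids_eq
    by (simp add: class_j.norm_sq_fluctuation_def class_i.norm_sq_fluctuation_def feat_tvar_def)
qed

text \<open>It is a sum of
  functions of S i and of S j, except for the product of the two fluctuations, which has mean zero
  by independence.\<close>

definition support_term_j where
  "support_term_j y = (8 *\<^sub>R \<kappa>) \<bullet> \<epsilon> j y + 8 * feat_tvar (D i) f * norm (\<epsilon> j y)^2 + fluct_j y^2"

definition support_term_i where
  "support_term_i y = (- 8 *\<^sub>R \<kappa>) \<bullet> \<epsilon> i y + 8 * feat_tvar (D i) f * norm (\<epsilon> i y)^2 + fluct_i y^2"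

definition support_bound where
  "support_bound S = 4 * (\<integral>x. (noise i x \<bullet> \<delta>)^2 \<partial>D i) + support_term_j (S j) + support_term_i (S i)
     - 2 * (fluct_j (S j) * fluct_i (S i))"

lemma
  shows integrable_query_moment: "integrable (D i) (\<lambda>x. (score_gap i j (S, x) - margin)^2)"
    and integral_query_moment_le: "(\<integral>x. (score_gap i j (S, x) - margin)^2 \<partial>D i) \<le> support_bound S"
proof -
  define e where "e = \<epsilon> j (S j) - \<epsilon> i (S i)"
  define Y where "Y = fluct_j (S j) - fluct_i (S i)"
  have gap: "(score_gap i j (S, x) - margin)^2 = (Y - 2 * (noise i x \<bullet> (\<delta> + e)))^2" for x
    by (simp add: score_gap_sub_margin Y_def e_def)
  show "integrable (D i) (\<lambda>x. (score_gap i j (S, x) - margin)^2)"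
    unfolding gap by (rule class_i.integrable_const_minus_inner_sq)
  have "(\<integral>x. (score_gap i j (S, x) - margin)^2 \<partial>D i) = Y^2 + 4 * (\<integral>x. (noise i x \<bullet> (\<delta> + e))^2 \<partial>D i)"
    unfolding gap by (rule class_i.integral_const_minus_inner_sq)
  also have "\<dots> \<le> Y^2 + 4 * ((\<integral>x. (noise i x \<bullet> \<delta>)^2 \<partial>D i) + 2 * (e \<bullet> \<kappa>)
      + feat_tvar (D i) f * norm e^2)"
    using class_i.integral_inner_add_sq_le[of \<delta> e] by (simp add: feat_tvar_def)
  also have "\<dots> \<le> support_bound S"
  proof -
    have "0 \<le> feat_tvar (D i) f" by (simp add: feat_tvar_def)
    then have "feat_tvar (D i) f * norm e^2
        \<le> feat_tvar (D i) f * (2 * norm (\<epsilon> j (S j))^2 + 2 * norm (\<epsilon> i (S i))^2)"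
      unfolding e_def by (intro mult_left_mono norm_diff_sq_le)
    moreover have "e \<bullet> \<kappa> = \<kappa> \<bullet> \<epsilon> j (S j) - \<kappa> \<bullet> \<epsilon> i (S i)"
      by (simp add: e_def inner_diff_left inner_commute)
    moreover have "Y^2 = fluct_j (S j)^2 - 2 * (fluct_j (S j) * fluct_i (S i)) + fluct_i (S i)^2"
      by (simp add: Y_def power2_diff)
    ultimately show ?thesis
      by (simp add: support_bound_def support_term_j_def support_term_i_def algebra_simps)
  qed
  finally show "(\<integral>x. (score_gap i j (S, x) - margin)^2 \<partial>D i) \<le> support_bound S" .
qed

abbreviation second_moment_bound :: real where
  "second_moment_bound \<equiv> 4 * (\<integral>x. (noise i x \<bullet> \<delta>)^2 \<partial>D i)
     + 12 * (feat_tvar (D i) f + feat_tvar (D j) f)^2 / real m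
     + 6 * norm \<delta>^2 * (feat_tvar (D i) f + feat_tvar (D j) f) / real m
     + 3 / real m^3 * (feat_M4 (D i) f + feat_M4 (D j) f
         + 2 * (real m - 1) * (feat_tvar (D i) f + feat_tvar (D j) f)^2)"

lemma
  shows integrable_support_term_j: "integrable (shots j) support_term_j"
    and integral_support_term_j_le: "integral\<^sup>L (shots j) support_term_j
      \<le> 8 * feat_tvar (D i) f * feat_tvar (D j) f / m + 6 * norm \<delta>^2 * feat_tvar (D j) f / m
        + 3 * (feat_M4 (D j) f + 2 * (real m - 1) * feat_tvar (D j) f^2) / real m^3"
  using class_j.integrable_sample_mean_combination[OF one_le_shots,
        of "8 *\<^sub>R \<kappa>" "8 * feat_tvar (D i) f" \<delta>]
    class_j.integral_sample_mean_combination_le[OF one_le_shots,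
        of "8 *\<^sub>R \<kappa>" "8 * feat_tvar (D i) f" \<delta>]
  by (simp_all add: support_term_j_def[abs_def] feat_tvar_def feat_M4_def)

lemma
  shows integrable_support_term_i: "integrable (shots i) support_term_i"
    and integral_support_term_i_le: "integral\<^sup>L (shots i) support_term_i
      \<le> 8 * feat_tvar (D i) f * feat_tvar (D i) f / m
        + 3 * (feat_M4 (D i) f + 2 * (real m - 1) * feat_tvar (D i) f^2) / real m^3"
  using class_i.integrable_sample_mean_combination[OF one_le_shots,
        of "- 8 *\<^sub>R \<kappa>" "8 * feat_tvar (D i) f" 0]
    class_i.integral_sample_mean_combination_le[OF one_le_shots,
        of "- 8 *\<^sub>R \<kappa>" "8 * feat_tvar (D i) f" 0]
  by (simp_all add: support_term_i_def[abs_def] feat_tvar_def feat_M4_def)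

lemma
  shows integrable_support_bound: "integrable SM support_bound"
    and integral_support_bound_le: "integral\<^sup>L SM support_bound \<le> second_moment_bound"
proof -
  have prob: "\<And>c. c \<in> {..<C} \<Longrightarrow> prob_space (shots c)" using prob_space_shots by simp
  have ij: "i \<in> {..<C}" "j \<in> {..<C}" "j \<noteq> i" using i_lt_C j_lt_C i_neq_j by auto
  have fluct: "integrable (shots j) fluct_j" "integrable (shots i) fluct_i"
    by (rule class_j.integrable_norm_sq_fluctuation class_i.integrable_norm_sq_fluctuation)+
  note components =
    integrable_PiM_component[where M=shots, OF prob ij(2) integrable_support_term_j]
    integrable_PiM_component[where M=shots, OF prob ij(1) integrable_support_term_i]
    integrable_PiM_two_components[where M=shots, OF prob finite_lessThan ij(2,1,3) fluct]
    integral_PiM_component[where M=shots, OF prob ij(2) integrable_support_term_j]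
    integral_PiM_component[where M=shots, OF prob ij(1) integrable_support_term_i]
    integral_PiM_two_components[where M=shots, OF prob finite_lessThan ij(2,1,3) fluct]
  interpret support: prob_space "PiM {..<C} shots"
    using prob_space_support by (simp add: support_measure_eq)
  show "integrable SM support_bound"
    unfolding support_bound_def[abs_def] support_measure_eq
    by (intro Bochner_Integration.integrable_diff Bochner_Integration.integrable_add
        Bochner_Integration.integrable_mult_right support.integrable_const components(1-3))
  have "integral\<^sup>L SM support_bound = 4 * (\<integral>x. (noise i x \<bullet> \<delta>)^2 \<partial>D i)
      + integral\<^sup>L (shots j) support_term_j + integral\<^sup>L (shots i) support_term_i"
    unfolding support_bound_def[abs_def] support_measure_eq using components support.prob_space
    by (simp add: class_i.integral_norm_sq_fluctuation)
  also have "\<dots> \<le> second_moment_bound"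
    using integral_support_term_j_le integral_support_term_i_le one_le_shots
      pair_moment_terms_le[where vi="feat_tvar (D i) f" and vj="feat_tvar (D j) f" and dd="norm \<delta>^2"
          and Mi="feat_M4 (D i) f" and Mj="feat_M4 (D j) f" and m=m]
    by (simp add: feat_tvar_def)
  finally show "integral\<^sup>L SM support_bound \<le> second_moment_bound" .
qed

lemma support_bound_nonneg: "0 \<le> support_bound S"
proof -
  have "0 \<le> (\<integral>x. (score_gap i j (S, x) - margin)^2 \<partial>D i)"
    by (intro Bochner_Integration.integral_nonneg) simp
  then show ?thesis using integral_query_moment_le[of S] by linarith
qed

lemma measure_confusion_event_le_second_moment:
  "measure (SM \<Otimes>\<^sub>M D i) (confusion_event i j) \<le> second_moment_bound / margin^2"
proof -
  interpret joint: prob_space "SM \<Otimes>\<^sub>M D i"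
    by (intro prob_space_pair prob_space_support class_i.prob_space_axioms)
  have [measurable]: "score_gap i j \<in> borel_measurable (SM \<Otimes>\<^sub>M D i)"
    using i_lt_C j_lt_C by (rule borel_measurable_score_gap)
  have "(\<integral>\<^sup>+\<omega>. ennreal ((score_gap i j \<omega> - margin)^2) \<partial>(SM \<Otimes>\<^sub>M D i))
      = (\<integral>\<^sup>+S. (\<integral>\<^sup>+x. ennreal ((score_gap i j (S, x) - margin)^2) \<partial>D i) \<partial>SM)"
    by (rule class_i.nn_integral_fst[symmetric]) measurable
  also have "\<dots> \<le> (\<integral>\<^sup>+S. ennreal (support_bound S) \<partial>SM)"
  proof (rule nn_integral_mono)
    fix S
    have "(\<integral>\<^sup>+x. ennreal ((score_gap i j (S, x) - margin)^2) \<partial>D i)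
        = ennreal (\<integral>x. (score_gap i j (S, x) - margin)^2 \<partial>D i)"
      using integrable_query_moment by (intro nn_integral_eq_integral) auto
    also have "\<dots> \<le> ennreal (support_bound S)"
      using integral_query_moment_le by (rule ennreal_leI)
    finally show "(\<integral>\<^sup>+x. ennreal ((score_gap i j (S, x) - margin)^2) \<partial>D i)
        \<le> ennreal (support_bound S)" .
  qed
  also have "\<dots> = ennreal (integral\<^sup>L SM support_bound)"
    using integrable_support_bound support_bound_nonneg by (intro nn_integral_eq_integral) auto
  also have "\<dots> \<le> ennreal second_moment_bound"
    using integral_support_bound_le by (rule ennreal_leI)
  finally have moment: "(\<integral>\<^sup>+\<omega>. ennreal ((score_gap i j \<omega> - margin)^2) \<partial>(SM \<Otimes>\<^sub>M D i))
      \<le> ennreal second_moment_bound" .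
  have "0 \<le> integral\<^sup>L SM support_bound"
    by (intro Bochner_Integration.integral_nonneg support_bound_nonneg)
  then have "0 \<le> second_moment_bound"
    using integral_support_bound_le by linarith
  then show ?thesis
    unfolding confusion_event_def
    using joint.prob_nonpos_le_second_moment[OF _ margin_pos _ moment] by simp
qed

abbreviation d_ij :: real where "d_ij \<equiv> norm \<delta>"

abbreviation Vt_ij :: real where "Vt_ij \<equiv> feat_dirvar (D i) f ((1 / d_ij) *\<^sub>R \<delta>) / d_ij^2"

abbreviation V_ij :: real where "V_ij \<equiv> (feat_tvar (D i) f + feat_tvar (D j) f) / d_ij^2"

abbreviation Theta_ij :: real where "Theta_ij \<equiv> (feat_M4 (D i) f + feat_M4 (D j) f) / d_ij^4"

abbreviation den_ij :: real where
  "den_ij \<equiv> (1 + (feat_tvar (D j) f - feat_tvar (D i) f) / (real m * d_ij^2))^2"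

lemma measure_confusion_event_le:
  "measure (SM \<Otimes>\<^sub>M D i) (confusion_event i j)
     \<le> (4 * Vt_ij + 12 / real m * V_ij^2 + 6 / real m * V_ij) / den_ij
       + (3 / real m^3 * (Theta_ij + 2 * (real m - 1) * V_ij^2)) / den_ij"
proof -
  have d: "0 < d_ij" using means_distinct by simp
  have m: "0 < real m" using one_le_shots by simp
  have "feat_dirvar (D i) f ((1 / d_ij) *\<^sub>R \<delta>) = (\<integral>x. (noise i x \<bullet> \<delta>)^2 \<partial>D i) / d_ij^2"
    unfolding feat_dirvar_def by (simp add: power_divide inner_commute)
  moreover have "(4 * (Q / d^2 / d^2) + 12 / m * ((vi + vj) / d^2)^2 + 6 / m * ((vi + vj) / d^2))
        / (1 + (vj - vi) / (m * d^2))^2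
      + (3 / m^3 * ((Mi + Mj) / d^4 + 2 * (m - 1) * ((vi + vj) / d^2)^2))
        / (1 + (vj - vi) / (m * d^2))^2
    = (4 * Q + 12 * (vi + vj)^2 / m + 6 * d^2 * (vi + vj) / m
        + 3 / m^3 * (Mi + Mj + 2 * (m - 1) * (vi + vj)^2)) / (d^2 + (vj - vi) / m)^2"
    if "0 < d" "0 < m" "0 < d^2 + (vj - vi) / m" for d m vi vj Mi Mj Q :: real
  proof -
    have den: "(1 + (vj - vi) / (m * d^2))^2 = (d^2 + (vj - vi) / m)^2 / d^4"
      using that by (simp add: field_simps power2_eq_square power4_eq_xxxx)
    have "(4 * (Q / d^2 / d^2) + 12 / m * ((vi + vj) / d^2)^2 + 6 / m * ((vi + vj) / d^2))
        + (3 / m^3 * ((Mi + Mj) / d^4 + 2 * (m - 1) * ((vi + vj) / d^2)^2))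
      = (4 * Q + 12 * (vi + vj)^2 / m + 6 * d^2 * (vi + vj) / m
          + 3 / m^3 * (Mi + Mj + 2 * (m - 1) * (vi + vj)^2)) / d^4"
      using that by (simp add: field_simps power2_eq_square power4_eq_xxxx)
    then show ?thesis
      using that unfolding den add_divide_distrib[symmetric] by (simp add: field_simps)
  qed
  ultimately have "(4 * Vt_ij + 12 / real m * V_ij^2 + 6 / real m * V_ij) / den_ij
       + (3 / real m^3 * (Theta_ij + 2 * (real m - 1) * V_ij^2)) / den_ij
     = second_moment_bound / margin^2"
    using d m margin_pos by (simp add: diff_divide_distrib)
  then show ?thesis using measure_confusion_event_le_second_moment by simp
qed

end

theorem theorem2:
  fixes C m :: nat and D :: "nat \<Rightarrow> 'x measure" and f :: "'x \<Rightarrow> 'a::euclidean_space"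
    and tb :: "nat set \<Rightarrow> nat"
  assumes "C \<ge> 2" and "m \<ge> 1"
    and "tie_rule tb"
    and "\<And>c. c < C \<Longrightarrow> prob_space (D c)"
    and "\<And>c. c < C \<Longrightarrow> f \<in> borel_measurable (D c)"
    and "\<And>c. c < C \<Longrightarrow> integrable (D c) (\<lambda>x. (norm (f x - feat_mean (D c) f))^4)"
    and "\<And>i j. i < C \<Longrightarrow> j < C \<Longrightarrow> i \<noteq> j \<Longrightarrow> feat_mean (D i) f \<noteq> feat_mean (D j) f"
    and "\<And>i j. i < C \<Longrightarrow> j < C \<Longrightarrow> i \<noteq> j \<Longrightarrow>
           (norm (feat_mean (D j) f - feat_mean (D i) f))^2
             + (feat_tvar (D j) f - feat_tvar (D i) f) / real m > 0"
  shows "ncc_err tb C m D f \<le>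
    (1 / real C) * (\<Sum>i<C. \<Sum>j\<in>{..<C} - {i}.
       (let d = norm (feat_mean (D j) f - feat_mean (D i) f);
            u = (1 / d) *\<^sub>R (feat_mean (D j) f - feat_mean (D i) f);
            Vt = feat_dirvar (D i) f u / d^2;
            V = (feat_tvar (D i) f + feat_tvar (D j) f) / d^2;
            den = (1 + (feat_tvar (D j) f - feat_tvar (D i) f) / (real m * d^2))^2
        in (4 * Vt + 12 / real m * V^2 + 6 / real m * V) / den))
  + (1 / real C) * (\<Sum>i<C. \<Sum>j\<in>{..<C} - {i}.
       (let d = norm (feat_mean (D j) f - feat_mean (D i) f);
            V = (feat_tvar (D i) f + feat_tvar (D j) f) / d^2;
            \<Theta> = (feat_M4 (D i) f + feat_M4 (D j) f) / d^4;
            den = (1 + (feat_tvar (D j) f - feat_tvar (D i) f) / (real m * d^2))^2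
        in (3 / real m^3 * (\<Theta> + 2 * (real m - 1) * V^2)) / den))"
proof -
  interpret ncc_model C m D f
    using assms(2,4-6) by (rule ncc_model.intro)
  have "ncc_pair C m D f i j" if "i < C" "j < C" "i \<noteq> j" for i j
    using ncc_model_axioms that assms(7,8)[OF that]
    by (intro ncc_pair.intro ncc_pair_axioms.intro) auto
  then show ?thesis
    unfolding Let_def
    by (intro ncc_err_le_sum_pair_bounds[OF assms(3)] ncc_pair.measure_confusion_event_le)
qed

end
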